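(* Let $\Gamma$ be a finite group, $S\subseteq\Gamma$, $g\ge 3$, and $\Sigma$ an $|S|$-list of elements of $\Gamma$. If there exists an $RSM_\Gamma(S,g;\Sigma)$, then $\mathrm{GOP}(C_g[\Gamma,S];\, g\,\omega(\Sigma))$ has a solution, where $g\,\omega(\Sigma)=[g\,\omega(\sigma)\mid \sigma\in\Sigma]$.
   Context: A list is a multiset. For a list $\Sigma=[\sigma_1,\dots,\sigma_v]$ of elements of a group, $\omega(\Sigma)=[\omega(\sigma_1),\ldots,\omega(\sigma_v)]$ where $\omega(\sigma)$ is the order of $\sigma$. Let $\Gamma$ be a group (written additively, not necessarily abelian), $S\subseteq\Gamma$ and $\Sigma$ an $|S|$-list of elements of $\Gamma$. A row-sum matrix $RSM_\Gamma(S,g;\Sigma)$ is an $|S|\times g$ matrix ($g\ge2$) with entries in $\Gamma$ such that each column is a permutation (arrangement) of $S$ and the multiset of left-to-right row sums $r_1+r_2+\cdots+r_g$ equals $\Sigma$. For $g\ge3$, $C_g[\Gamma,S]$ is the graph with vertex set $\mathbb{Z}_g\times\Gamma$ and edges $\{(i,x),(i+1,d+x)\}$ for $i\in\mathbb{Z}_g$, $x\in\Gamma$, $d\in S$. For a regular graph $G$ and a list $[a_1,\ldots,a_r]$ of integers $\ge 3$, a solution to $\mathrm{GOP}(G;[a_1,\dots,a_r])$ is a partition of the edge set of $G$ into $2$-factors $F_1,\ldots,F_r$, where $F_i$ is a spanning subgraph all of whose components are cycles of length $a_i$. *)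

theory Defs
  imports Main "HOL-Library.Multiset"
begin

definition add_order :: "'a::group_add \<Rightarrow> nat" where
  "add_order x = (LEAST n. 0 < n \<and> ((+) x ^^ n) 0 = 0)"

definition row_sum :: "(nat \<Rightarrow> nat \<Rightarrow> 'a::monoid_add) \<Rightarrow> nat \<Rightarrow> nat \<Rightarrow> 'a" where
  "row_sum M g i = sum_list (map (\<lambda>j. M i j) [0..<g])"

definition is_RSM :: "'a::group_add set \<Rightarrow> nat \<Rightarrow> 'a multiset \<Rightarrow> (nat \<Rightarrow> nat \<Rightarrow> 'a) \<Rightarrow> bool" where
  "is_RSM S g \<Sigma> M \<longleftrightarrow> 2 \<le> g \<and> finite S \<and> size \<Sigma> = card S \<and>
     (\<forall>j<g. bij_betw (\<lambda>i. M i j) {..<card S} S) \<and>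
     image_mset (row_sum M g) (mset [0..<card S]) = \<Sigma>"

definition Cg_vertices :: "nat \<Rightarrow> (nat \<times> 'a) set" where
  "Cg_vertices g = {..<g} \<times> UNIV"

definition Cg_edges :: "nat \<Rightarrow> 'a::group_add set \<Rightarrow> (nat \<times> 'a) set set" where
  "Cg_edges g S = {{(i, x), ((i + 1) mod g, d + x)} | i x d. i < g \<and> d \<in> S}"

definition cycle_edges :: "'v list \<Rightarrow> 'v set set" where
  "cycle_edges c = {{c ! k, c ! ((k + 1) mod length c)} | k. k < length c}"

definition is_cycle_of_len :: "nat \<Rightarrow> 'v list \<Rightarrow> bool" where
  "is_cycle_of_len a c \<longleftrightarrow> 3 \<le> a \<and> length c = a \<and> distinct c"

definition cycle_factor :: "'v set \<Rightarrow> 'v set set \<Rightarrow> nat \<Rightarrow> 'v set set \<Rightarrow> bool" where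
  "cycle_factor V E a F \<longleftrightarrow> F \<subseteq> E \<and>
     (\<exists>C. (\<forall>c\<in>C. is_cycle_of_len a c \<and> set c \<subseteq> V) \<and>
          (\<forall>v\<in>V. \<exists>!c. c \<in> C \<and> v \<in> set c) \<and>
          F = (\<Union>c\<in>C. cycle_edges c))"

definition GOP_solvable :: "'v set \<Rightarrow> 'v set set \<Rightarrow> nat multiset \<Rightarrow> bool" where
  "GOP_solvable V E A \<longleftrightarrow>
     (\<exists>as F. mset as = A \<and>
        (\<forall>i<length as. cycle_factor V E (as ! i) (F i)) \<and>
        (\<forall>i<length as. \<forall>j<length as. i \<noteq> j \<longrightarrow> F i \<inter> F j = {}) \<and>
        (\<Union>i<length as. F i) = E)"

end

(*
  Row i of the row-sum matrix M with row sum \<sigma>\<^sub>i defines a map p\<^sub>i on \<int>\<^sub>g \<times> \<Gamma> that moves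
  every vertex of layer j to layer j + 1 along an edge of C\<^sub>g[\<Gamma>, S] labelled by an entry of row i.
  Going once around the layers translates a vertex of layer 0 by \<sigma>\<^sub>i, so every point of p\<^sub>i has
  exact period g \<omega>(\<sigma>\<^sub>i), and the edges {v, p\<^sub>i v} form a 2-factor of cycles of that length.
  As every column of M is an arrangement of S, each edge of C\<^sub>g[\<Gamma>, S] comes from exactly one row;
  for g \<ge> 3 no edge can be traversed in opposite directions by two rows.
*)

theory Submission
  imports Defs "HOL-Combinatorics.Orbits"
begin

lemma funpow_plus_eq:
  fixes s x :: "'a::monoid_add"
  shows "((+) s ^^ m) x = ((+) s ^^ m) 0 + x"
  by (induction m) (simp_all add: add.assoc)

lemma ex_funpow_plus_eq_0: "\<exists>n>0. ((+) (s::'a::{group_add,finite}) ^^ n) 0 = 0"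
proof -
  let ?f = "\<lambda>n. ((+) s ^^ n) 0"
  have "\<not> inj ?f"
    using finite_imageD[of ?f UNIV] by auto
  then obtain a b where "a \<noteq> b" "?f a = ?f b"
    by (auto simp: inj_def)
  then obtain a b where "a < b" "?f a = ?f b"
    by (metis linorder_neqE_nat)
  moreover have "?f b = ?f (b - a) + ?f a"
    using \<open>a < b\<close> funpow_add[of "b - a" a "(+) s"] funpow_plus_eq[where m = "b - a"] by simp
  ultimately have "?f (b - a) + ?f a = 0 + ?f a"
    by simp
  then have "?f (b - a) = 0"
    by (rule add_right_imp_eq)
  then show ?thesis
    using \<open>a < b\<close> by (intro exI[of _ "b - a"]) simp
qed

lemma
  fixes s :: "'a::{group_add,finite}"
  shows add_order_pos: "0 < add_order s"
    and funpow_plus_add_order: "((+) s ^^ add_order s) 0 = 0"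
  using LeastI_ex[OF ex_funpow_plus_eq_0[of s]] unfolding add_order_def by auto

lemma add_order_le: "0 < m \<Longrightarrow> ((+) s ^^ m) 0 = 0 \<Longrightarrow> add_order s \<le> m"
  unfolding add_order_def by (auto intro: Least_le)

section \<open>Maps whose points all have the same exact period\<close>

definition exact_period :: "('v \<Rightarrow> 'v) \<Rightarrow> nat \<Rightarrow> 'v \<Rightarrow> bool" where
  "exact_period p L v \<longleftrightarrow> 0 < L \<and> (p ^^ L) v = v \<and> (\<forall>k. 0 < k \<longrightarrow> k < L \<longrightarrow> (p ^^ k) v \<noteq> v)"

definition orbit_walk :: "('v \<Rightarrow> 'v) \<Rightarrow> nat \<Rightarrow> 'v \<Rightarrow> 'v list" where
  "orbit_walk p L v = map (\<lambda>k. (p ^^ k) v) [0..<L]"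

definition perm_edges :: "'v set \<Rightarrow> ('v \<Rightarrow> 'v) \<Rightarrow> 'v set set" where
  "perm_edges V p = (\<lambda>v. {v, p v}) ` V"

lemma funpow_commute: "(f ^^ m) ((f ^^ n) x) = (f ^^ n) ((f ^^ m) x)"
  by (metis add.commute comp_apply funpow_add)

lemma exact_period_funpow:
  assumes "exact_period p L v"
  shows "exact_period p L ((p ^^ j) v)"
  unfolding exact_period_def
proof (intro conjI allI impI)
  have per: "(p ^^ L) v = v" and "0 < L"
    using assms by (auto simp: exact_period_def)
  show "0 < L" by fact
  show "(p ^^ L) ((p ^^ j) v) = (p ^^ j) v"
    by (simp add: funpow_commute[where f = p and m = L] per)
  fix k assume "0 < k" "k < L"
  show "(p ^^ k) ((p ^^ j) v) \<noteq> (p ^^ j) v"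
  proof
    assume eq: "(p ^^ k) ((p ^^ j) v) = (p ^^ j) v"
    define m where "m = L - j mod L"
    have return: "(p ^^ m) ((p ^^ j) v) = v"
    proof -
      have "m + j = L + L * (j div L)"
        using mod_less_divisor[OF \<open>0 < L\<close>, of j] mult_div_mod_eq[of L j]
        unfolding m_def by linarith
      then have "(m + j) mod L = 0"
        by simp
      then show ?thesis
        using funpow_mod_eq[OF per, of "m + j"] by (simp add: funpow_add)
    qed
    have "(p ^^ k) v = (p ^^ m) ((p ^^ k) ((p ^^ j) v))"
      using funpow_commute[where f = p and m = m and n = k] return by simp
    then have "(p ^^ k) v = v"
      by (simp add: eq return)
    then show False
      using assms \<open>0 < k\<close> \<open>k < L\<close> by (auto simp: exact_period_def)
  qed
qed

lemma distinct_orbit_walk: "exact_period p L v \<Longrightarrow> distinct (orbit_walk p L v)"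
proof -
  assume per: "exact_period p L v"
  have less: "(p ^^ i) v \<noteq> (p ^^ j) v" if "i < j" "j < L" for i j
  proof
    assume "(p ^^ i) v = (p ^^ j) v"
    then have "(p ^^ (L - j + i)) v = (p ^^ (L - j + j)) v"
      by (simp add: funpow_add)
    then have "(p ^^ (L - j + i)) v = v"
      using per \<open>j < L\<close> by (simp add: exact_period_def)
    then show False
      using per that by (auto simp: exact_period_def)
  qed
  have "(p ^^ i) v \<noteq> (p ^^ j) v" if "i \<noteq> j" "i < L" "j < L" for i j
    using that less[of i j] less[of j i] by (cases "i < j") auto
  then show ?thesis
    unfolding orbit_walk_def distinct_conv_nth by simp
qed

lemma set_orbit_walk:
  assumes "exact_period p L v"
  shows "set (orbit_walk p L v) = orbit p v"
  using assms orbit_altdef_bounded[where f = p and n = L and s = v]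
  by (auto simp: exact_period_def orbit_walk_def)

lemma cycle_edges_orbit_walk:
  assumes "exact_period p L v"
  shows "cycle_edges (orbit_walk p L v) = perm_edges (orbit p v) p"
proof -
  define w where "w = orbit_walk p L v"
  have per: "(p ^^ L) v = v" and "0 < L"
    using assms by (auto simp: exact_period_def)
  have len: "length w = L"
    by (simp add: w_def orbit_walk_def)
  have next_eq: "w ! ((k + 1) mod L) = p (w ! k)" if "k < L" for k
    using that \<open>0 < L\<close> funpow_mod_eq[OF per, of "Suc k"] by (simp add: w_def orbit_walk_def)
  have "cycle_edges w = (\<lambda>k. {w ! k, p (w ! k)}) ` {..<L}"
    unfolding cycle_edges_def len using next_eq by auto
  also have "\<dots> = (\<lambda>u. {u, p u}) ` (\<lambda>k. w ! k) ` {..<L}"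
    by (simp add: image_image)
  also have "(\<lambda>k. w ! k) ` {..<L} = set w"
    unfolding set_conv_nth len by auto
  also have "\<dots> = orbit p v"
    using set_orbit_walk[OF assms] by (simp add: w_def)
  finally show ?thesis
    by (simp add: w_def perm_edges_def)
qed

lemma self_in_orbit_if_exact_period: "exact_period p L v \<Longrightarrow> v \<in> orbit p v"
  unfolding exact_period_def orbit_altdef by (metis (mono_tags, lifting) mem_Collect_eq)

lemma orbit_eq_if_mem_orbit:
  assumes "exact_period p L v" and "u \<in> orbit p v"
  shows "orbit p u = orbit p v"
  using self_in_orbit_if_exact_period[OF assms(1)] assms(2) by (auto intro: orbit_swap orbit_trans)

lemma orbit_subset_if_maps:
  assumes "\<forall>v\<in>V. p v \<in> V" and "v \<in> V"
  shows "orbit p v \<subseteq> V"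
proof
  fix u assume "u \<in> orbit p v"
  then show "u \<in> V"
    by induction (use assms in auto)
qed

lemma cycle_factor_perm_edges:
  assumes maps: "\<forall>v\<in>V. p v \<in> V"
    and period: "\<forall>v\<in>V. exact_period p L v"
    and "3 \<le> L"
    and "perm_edges V p \<subseteq> E"
  shows "cycle_factor V E L (perm_edges V p)"
proof -
  \<comment> \<open>one representative per orbit, so that each cycle is listed once\<close>
  define rep where "rep v = (SOME u. u \<in> orbit p v)" for v
  define C where "C = (\<lambda>v. orbit_walk p L (rep v)) ` V"
  have self: "v \<in> orbit p v" if "v \<in> V" for v
    by (rule self_in_orbit_if_exact_period[OF period[rule_format, OF that]])
  have rep: "rep v \<in> V" "orbit p (rep v) = orbit p v" if "v \<in> V" for v
  proof -
    have "rep v \<in> orbit p v"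
      unfolding rep_def using self[OF that] by (rule someI)
    then show "rep v \<in> V" "orbit p (rep v) = orbit p v"
      using orbit_subset_if_maps[OF maps that] orbit_eq_if_mem_orbit[OF period[rule_format, OF that]]
      by blast+
  qed
  have set_walk: "set (orbit_walk p L (rep v)) = orbit p v" if "v \<in> V" for v
    using set_orbit_walk[OF period[rule_format, OF rep(1)[OF that]]] rep(2)[OF that] by simp
  have cycle: "is_cycle_of_len L c \<and> set c \<subseteq> V" if "c \<in> C" for c
  proof -
    obtain v where v: "v \<in> V" and c: "c = orbit_walk p L (rep v)"
      using \<open>c \<in> C\<close> by (auto simp: C_def)
    have "distinct c"
      unfolding c by (rule distinct_orbit_walk[OF period[rule_format, OF rep(1)[OF v]]])
    moreover have "set c \<subseteq> V"
      using set_walk[OF v] orbit_subset_if_maps[OF maps v] c by simp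
    ultimately show ?thesis
      using \<open>3 \<le> L\<close> c by (simp add: is_cycle_of_len_def orbit_walk_def)
  qed
  have unique: "\<exists>!c. c \<in> C \<and> v \<in> set c" if "v \<in> V" for v
  proof (rule ex1I[of _ "orbit_walk p L (rep v)"])
    show "orbit_walk p L (rep v) \<in> C \<and> v \<in> set (orbit_walk p L (rep v))"
      using that set_walk self by (auto simp: C_def)
  next
    fix c assume "c \<in> C \<and> v \<in> set c"
    then obtain w where "w \<in> V" "c = orbit_walk p L (rep w)" "v \<in> orbit p w"
      using set_walk by (auto simp: C_def)
    moreover have "orbit p v = orbit p w"
      using orbit_eq_if_mem_orbit[OF period[rule_format, OF \<open>w \<in> V\<close>] \<open>v \<in> orbit p w\<close>] .
    ultimately show "c = orbit_walk p L (rep v)"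
      by (simp add: rep_def)
  qed
  have "cycle_edges (orbit_walk p L (rep v)) = perm_edges (orbit p v) p" if "v \<in> V" for v
    using cycle_edges_orbit_walk[OF period[rule_format, OF rep(1)[OF that]]] rep(2)[OF that] by simp
  then have "(\<Union>c\<in>C. cycle_edges c) = (\<Union>v\<in>V. perm_edges (orbit p v) p)"
    by (simp add: C_def)
  also have "\<dots> = perm_edges (\<Union>v\<in>V. orbit p v) p"
    by (simp add: perm_edges_def image_UN)
  also have "(\<Union>v\<in>V. orbit p v) = V"
    using self orbit_subset_if_maps[OF maps] by blast
  finally have "perm_edges V p = (\<Union>c\<in>C. cycle_edges c)" ..
  then show ?thesis
    unfolding cycle_factor_def using assms(4) cycle unique by (intro conjI exI[of _ C]) simp_all
qed

section \<open>The row permutations of a row-sum matrix\<close>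

text \<open>The step out of layer j reads the row at column g - 1 - j: as each step adds on the left,
  g steps from layer 0 add the row sum in its left-to-right order.\<close>

definition row_perm :: "nat \<Rightarrow> (nat \<Rightarrow> 'a::plus) \<Rightarrow> nat \<times> 'a \<Rightarrow> nat \<times> 'a" where
  "row_perm g r = (\<lambda>(j, x). ((j + 1) mod g, r (g - 1 - j) + x))"

lemma row_perm_apply [simp]: "row_perm g r (j, x) = ((j + 1) mod g, r (g - 1 - j) + x)"
  by (simp add: row_perm_def)

lemma fst_row_perm: "fst (row_perm g r v) = (fst v + 1) mod g"
  by (cases v) simp

lemma row_perm_in_Cg_vertices: "0 < g \<Longrightarrow> row_perm g r v \<in> Cg_vertices g"
  by (simp add: Cg_vertices_def fst_row_perm mem_Times_iff)

lemma fst_funpow_row_perm: "fst v < g \<Longrightarrow> fst ((row_perm g r ^^ k) v) = (fst v + k) mod g"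
  by (induction k) (simp_all add: fst_row_perm mod_Suc_eq)

lemma funpow_row_perm_from_layer_0:
  "k \<le> g \<Longrightarrow> (row_perm g r ^^ k) (0, x) = (k mod g, sum_list (map r [g - k..<g]) + x)"
proof (induction k)
  case (Suc k)
  then have "[g - Suc k..<g] = (g - 1 - k) # [g - k..<g]"
    by (simp add: upt_conv_Cons Suc_diff_Suc)
  with Suc show ?case
    by (simp add: add.assoc mod_Suc_eq)
qed simp

lemma funpow_row_perm_rounds:
  "(row_perm g r ^^ (g * m)) (0, x) = (0, ((+) (sum_list (map r [0..<g])) ^^ m) x)"
proof (induction m arbitrary: x)
  case (Suc m)
  have "(row_perm g r ^^ (g * Suc m)) (0, x) = (row_perm g r ^^ g) ((row_perm g r ^^ (g * m)) (0, x))"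
    by (simp add: funpow_add)
  with Suc show ?case
    by (simp add: funpow_row_perm_from_layer_0)
qed simp

lemma exact_period_row_perm_layer_0:
  fixes r :: "nat \<Rightarrow> 'a::{group_add,finite}"
  assumes "0 < g"
  shows "exact_period (row_perm g r) (g * add_order (sum_list (map r [0..<g]))) (0, x)"
  unfolding exact_period_def
proof (intro conjI allI impI notI)
  define \<sigma> where "\<sigma> = sum_list (map r [0..<g])"
  show "0 < g * add_order (sum_list (map r [0..<g]))"
    using \<open>0 < g\<close> add_order_pos by simp
  show "(row_perm g r ^^ (g * add_order (sum_list (map r [0..<g])))) (0, x) = (0, x)"
    using funpow_plus_add_order[of \<sigma>] funpow_plus_eq[of "add_order \<sigma>" \<sigma> x]
    by (simp add: \<sigma>_def funpow_row_perm_rounds)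
  fix k assume "0 < k" "k < g * add_order (sum_list (map r [0..<g]))"
    and fixed: "(row_perm g r ^^ k) (0, x) = (0, x)"
  have "k mod g = 0"
    using fst_funpow_row_perm[where v = "(0, x)" and g = g and r = r and k = k] fixed \<open>0 < g\<close>
    by simp
  then obtain m where k: "k = g * m"
    by blast
  then have "0 < m"
    using \<open>0 < k\<close> by simp
  have "((+) \<sigma> ^^ m) x = x"
    using fixed by (simp add: k \<sigma>_def funpow_row_perm_rounds)
  then have "((+) \<sigma> ^^ m) 0 = 0"
    using funpow_plus_eq[of m \<sigma> x] add_right_imp_eq[of _ x 0] by simp
  then have "add_order \<sigma> \<le> m"
    using add_order_le \<open>0 < m\<close> by blast
  then show False
    using \<open>k < g * add_order (sum_list (map r [0..<g]))\<close> k by (simp add: \<sigma>_def)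
qed

lemma exact_period_row_perm:
  fixes r :: "nat \<Rightarrow> 'a::{group_add,finite}"
  assumes "0 < g" and "v \<in> Cg_vertices g"
  shows "exact_period (row_perm g r) (g * add_order (sum_list (map r [0..<g]))) v"
proof -
  obtain j y where v: "v = (j, y)" and "j < g"
    using assms(2) by (auto simp: Cg_vertices_def)
  define s where "s = sum_list (map r [g - j..<g])"
  have "v = (row_perm g r ^^ j) (0, - s + y)"
    using funpow_row_perm_from_layer_0[where k = j and g = g and r = r and x = "- s + y"] \<open>j < g\<close>
    by (simp add: v s_def add.assoc[symmetric])
  then show ?thesis
    using exact_period_funpow[OF exact_period_row_perm_layer_0[OF \<open>0 < g\<close>]] by simp
qed

lemma perm_edges_row_perm_subset_Cg_edges:
  assumes "0 < g" and "\<forall>j<g. r j \<in> S"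
  shows "perm_edges (Cg_vertices g) (row_perm g r) \<subseteq> Cg_edges g S"
proof
  fix e assume "e \<in> perm_edges (Cg_vertices g) (row_perm g r)"
  then obtain j x where "e = {(j, x), ((j + 1) mod g, r (g - 1 - j) + x)}" "j < g"
    by (auto simp: perm_edges_def Cg_vertices_def)
  moreover have "r (g - 1 - j) \<in> S"
    using assms by simp
  ultimately show "e \<in> Cg_edges g S"
    unfolding Cg_edges_def by blast
qed

lemma cycle_factor_row_perm:
  fixes r :: "nat \<Rightarrow> 'a::{group_add,finite}"
  assumes "3 \<le> g" and "\<forall>j<g. r j \<in> S"
  shows "cycle_factor (Cg_vertices g) (Cg_edges g S) (g * add_order (sum_list (map r [0..<g])))
           (perm_edges (Cg_vertices g) (row_perm g r))"
proof (rule cycle_factor_perm_edges)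
  have "g * 1 \<le> g * add_order (sum_list (map r [0..<g]))"
    using add_order_pos by (intro mult_le_mono2) (simp add: Suc_le_eq)
  then show "3 \<le> g * add_order (sum_list (map r [0..<g]))"
    using assms(1) by linarith
  have "0 < g"
    using assms(1) by simp
  then show "\<forall>v\<in>Cg_vertices g. row_perm g r v \<in> Cg_vertices g"
    and "\<forall>v\<in>Cg_vertices g. exact_period (row_perm g r) (g * add_order (sum_list (map r [0..<g]))) v"
    and "perm_edges (Cg_vertices g) (row_perm g r) \<subseteq> Cg_edges g S"
    using row_perm_in_Cg_vertices exact_period_row_perm perm_edges_row_perm_subset_Cg_edges[OF _ assms(2)]
    by blast+
qed

section \<open>Decomposing \<open>C\<^sub>g[\<Gamma>, S]\<close> along the rows\<close>

lemma mod_succ_not_involutive: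
  "a < g \<Longrightarrow> b < g \<Longrightarrow> 3 \<le> g \<Longrightarrow> (a + 1) mod g = b \<Longrightarrow> (b + 1) mod g \<noteq> (a::nat)"
  by (auto simp: mod_Suc split: if_splits)

lemma perm_edges_row_perm_disjoint:
  fixes r r' :: "nat \<Rightarrow> 'a::cancel_semigroup_add"
  assumes "3 \<le> g" and "\<forall>j<g. r j \<noteq> r' j"
  shows "perm_edges (Cg_vertices g) (row_perm g r) \<inter> perm_edges (Cg_vertices g) (row_perm g r') = {}"
proof (rule ccontr)
  assume "\<not> ?thesis"
  then obtain j x j' x' where "j < g" "j' < g"
    and eq: "{(j, x), row_perm g r (j, x)} = {(j', x'), row_perm g r' (j', x')}"
    by (auto simp: perm_edges_def Cg_vertices_def)
  then consider "(j, x) = (j', x')" "row_perm g r (j, x) = row_perm g r' (j', x')"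
    | "(j, x) = row_perm g r' (j', x')" "row_perm g r (j, x) = (j', x')"
    by (auto simp: doubleton_eq_iff)
  then show False
  proof cases
    case 1
    then have "r (g - 1 - j) = r' (g - 1 - j)"
      by auto
    then show False
      using assms(2) \<open>j < g\<close> by simp
  next
    case 2
    then show False
      using mod_succ_not_involutive[OF \<open>j' < g\<close> \<open>j < g\<close> assms(1)] by simp
  qed
qed

lemma Cg_edges_eq_Union_row_perm:
  assumes "0 < g" and columns: "\<forall>j<g. (\<lambda>i. M i j) ` I = S"
  shows "Cg_edges g S = (\<Union>i\<in>I. perm_edges (Cg_vertices g) (row_perm g (M i)))"
proof
  show "(\<Union>i\<in>I. perm_edges (Cg_vertices g) (row_perm g (M i))) \<subseteq> Cg_edges g S"
  proof (rule UN_least)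
    fix i assume "i \<in> I"
    then have "\<forall>j<g. M i j \<in> S"
      using columns by blast
    then show "perm_edges (Cg_vertices g) (row_perm g (M i)) \<subseteq> Cg_edges g S"
      by (rule perm_edges_row_perm_subset_Cg_edges[OF \<open>0 < g\<close>])
  qed
next
  show "Cg_edges g S \<subseteq> (\<Union>i\<in>I. perm_edges (Cg_vertices g) (row_perm g (M i)))"
  proof
    fix e assume "e \<in> Cg_edges g S"
    then obtain j x d where e: "e = {(j, x), ((j + 1) mod g, d + x)}" "j < g" "d \<in> S"
      by (auto simp: Cg_edges_def)
    have "d \<in> (\<lambda>i. M i (g - 1 - j)) ` I"
      using columns \<open>0 < g\<close> \<open>d \<in> S\<close> by simp
    then obtain i where "i \<in> I" "M i (g - 1 - j) = d"
      by blast
    then have "e \<in> perm_edges (Cg_vertices g) (row_perm g (M i))"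
      using e by (auto simp: perm_edges_def Cg_vertices_def)
    then show "e \<in> (\<Union>i\<in>I. perm_edges (Cg_vertices g) (row_perm g (M i)))"
      using \<open>i \<in> I\<close> by blast
  qed
qed

theorem mainTheorem4:
  fixes S :: "'a::{group_add, finite} set"
    and g :: nat
    and \<Sigma> :: "'a multiset"
  assumes "3 \<le> g"
    and "size \<Sigma> = card S"
    and "\<exists>M. is_RSM S g \<Sigma> M"
  shows "GOP_solvable (Cg_vertices g) (Cg_edges g S)
           (image_mset (\<lambda>\<sigma>. g * add_order \<sigma>) \<Sigma>)"
proof -
  obtain M where "is_RSM S g \<Sigma> M"
    using assms(3) by blast
  then have columns: "\<forall>j<g. bij_betw (\<lambda>i. M i j) {..<card S} S"
    and row_sums: "image_mset (row_sum M g) (mset [0..<card S]) = \<Sigma>"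
    by (auto simp: is_RSM_def)
  have entries: "\<forall>j<g. M i j \<in> S" if "i < card S" for i
    using columns that bij_betwE by fastforce
  define as where "as = map (\<lambda>i. g * add_order (row_sum M g i)) [0..<card S]"
  define F where "F i = perm_edges (Cg_vertices g) (row_perm g (M i))" for i
  have "mset as = image_mset (\<lambda>\<sigma>. g * add_order \<sigma>) \<Sigma>"
    unfolding as_def row_sums[symmetric] by (simp add: multiset.map_comp o_def)
  moreover have "cycle_factor (Cg_vertices g) (Cg_edges g S) (as ! i) (F i)" if "i < length as" for i
    using cycle_factor_row_perm[OF assms(1) entries, of i] that
    by (simp add: as_def F_def row_sum_def)
  moreover have "F i \<inter> F i' = {}" if "i < length as" "i' < length as" "i \<noteq> i'" for i i'
  proof -
    have "M i j \<noteq> M i' j" if "j < g" for j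
      using columns \<open>j < g\<close> \<open>i \<noteq> i'\<close> \<open>i < length as\<close> \<open>i' < length as\<close>
      by (auto simp: as_def bij_betw_def inj_on_def)
    then show ?thesis
      unfolding F_def by (intro perm_edges_row_perm_disjoint[OF assms(1)]) simp
  qed
  moreover have "(\<Union>i<length as. F i) = Cg_edges g S"
    using Cg_edges_eq_Union_row_perm[where I = "{..<card S}" and M = M] assms(1) columns
    by (simp add: as_def F_def bij_betw_def)
  ultimately show ?thesis
    unfolding GOP_solvable_def by blast
qed

end
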